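(* Let $\mathbb{H}=\mathbb{R}$ or $\mathbb{C}$, let $x,x_0\in\mathbb{H}^d$, and let $\{W_n\}_{n=1}^\infty$ be independent and identically distributed versions of a random subspace $W$ of $\mathbb{H}^d$ which has logarithmic Kaczmarz bound $0\le\alpha_{\log}\le 1$. Define the iterates $x_n=x_{n-1}+P_{W_n}(x)-P_{W_n}(x_{n-1})$ for $n\ge1$. Then $$\exp\left(\mathbb{E}\left[\log\|x-x_n\|^2\right]\right)\le \alpha_{\log}^n\,\|x-x_0\|^2 .$$
   Context: $\mathbb{H}^d$ is $\mathbb{R}^d$ or $\mathbb{C}^d$ with the standard inner product; $\mathbb{S}^{d-1}=\{u\in\mathbb{H}^d:\|u\|=1\}$; $P_W$ denotes the orthogonal projection onto a subspace $W$. A random subspace is a random variable taking values in the set of all linear subspaces of $\mathbb{H}^d$ (dimensions need not be fixed). The logarithmic Kaczmarz bound of a random subspace $W$ is $\alpha_{\log}=\sup_{u\in\mathbb{S}^{d-1}}\exp\left(\mathbb{E}\left[\log(1-\|P_W(u)\|^2)\right]\right)\in[0,1]$ (with $\log 0=-\infty$, $\exp(-\infty)=0$). *)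

theory Defs
  imports "HOL-Probability.Probability"
begin

(* For complex^'d the real inner product is
   Re <x,y>, and for a complex subspace this agrees with the Hermitian
   orthogonal projection. *)
definition proj :: "'a::real_inner set \<Rightarrow> 'a \<Rightarrow> 'a" where
  "proj W u = (THE w. w \<in> W \<and> (\<forall>v\<in>W. inner (u - w) v = 0))"

definition complex_subspace :: "(complex ^ 'd) set \<Rightarrow> bool" where
  "complex_subspace W \<longleftrightarrow> subspace W \<and> (\<forall>c::complex. \<forall>v\<in>W. c *s v \<in> W)"

(* measurable space of subspaces from a given class S: sigma algebra generated by the
   maps W \<mapsto> P_W(u) (equivalently: Borel sets of the Grassmannian topology) *)
definition subspace_measure :: "'a::euclidean_space set set \<Rightarrow> 'a set measure" where
  "subspace_measure S = sigma S {{W \<in> S. proj W u \<in> B} | u B. open B}"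

(* positive and negative parts of log, with log 0 = -\<infinity> *)
definition log_pos :: "real \<Rightarrow> ennreal" where
  "log_pos y = (if y \<le> 0 then 0 else ennreal (ln y))"

definition log_neg :: "real \<Rightarrow> ennreal" where
  "log_neg y = (if y \<le> 0 then \<infinity> else ennreal (- ln y))"

fun eexp :: "ereal \<Rightarrow> ereal" where
  "eexp (ereal r) = ereal (exp r)"
| "eexp PInfty = PInfty"
| "eexp MInfty = 0"

(* exp(E[log Z]) for a nonnegative random variable Z, with exp(-\<infinity>) = 0;
   if E[log Z] is undefined (\<infinity> - \<infinity>) we conservatively set the value to \<infinity> *)
definition exp_expect_log :: "'m measure \<Rightarrow> ('m \<Rightarrow> real) \<Rightarrow> ereal" where
  "exp_expect_log M Z =
     (let p = (\<integral>\<^sup>+ \<omega>. log_pos (Z \<omega>) \<partial>M); q = (\<integral>\<^sup>+ \<omega>. log_neg (Z \<omega>) \<partial>M)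
      in if p = \<infinity> \<and> q = \<infinity> then PInfty else eexp (enn2ereal p - enn2ereal q))"

definition alpha_log :: "'m measure \<Rightarrow> ('m \<Rightarrow> 'a::euclidean_space set) \<Rightarrow> ereal" where
  "alpha_log N W = (SUP u \<in> sphere 0 1. exp_expect_log N (\<lambda>\<omega>. 1 - (norm (proj (W \<omega>) u))\<^sup>2))"

fun kacz :: "(nat \<Rightarrow> 'a::real_inner set) \<Rightarrow> 'a \<Rightarrow> 'a \<Rightarrow> nat \<Rightarrow> 'a" where
  "kacz Ws x x0 0 = x0"
| "kacz Ws x x0 (Suc n) =
     kacz Ws x x0 n + proj (Ws (Suc n)) x - proj (Ws (Suc n)) (kacz Ws x x0 n)"

end

(* Let e_k = x - x_k. One step gives e_(k+1) = e_k - P_(W_(k+1)) e_k, hence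
   |e_(k+1)|^2 = |e_k|^2 (1 - |P_(W_(k+1)) u_k|^2) with u_k the direction of e_k, and |e_n|^2 is
   |e_0|^2 times a product of n factors in [0,1]. Taking logarithms turns the product into a sum.
   The direction u_k is a function of W_1, ..., W_k, which are independent of W_(k+1) ~ W, so by
   Fubini the expected logarithm of the k-th factor is an average over u of E[log(1 - |P_W u|^2)]
   and thus at most log alpha_log. *)

theory Submission
  imports Defs
begin

lemma log_pos_measurable[measurable]: "log_pos \<in> borel_measurable borel"
  unfolding log_pos_def by measurable

lemma log_neg_measurable[measurable]: "log_neg \<in> borel_measurable borel"
  unfolding log_neg_def by measurable

lemma log_neg_mult:
  assumes "0 \<le> a" "a \<le> 1" "0 \<le> b" "b \<le> 1"
  shows "log_neg (a * b) = log_neg a + log_neg b"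
proof (cases "a = 0 \<or> b = 0")
  case True
  then show ?thesis by (auto simp: log_neg_def)
next
  case False
  then have "0 < a" "0 < b" using assms by auto
  then show ?thesis
    using assms by (simp add: log_neg_def ln_mult ennreal_plus[symmetric] not_le)
qed

lemma log_neg_prod:
  assumes "\<And>i. i \<in> I \<Longrightarrow> 0 \<le> f i \<and> f i \<le> 1"
  shows "log_neg (\<Prod>i\<in>I. f i) = (\<Sum>i\<in>I. log_neg (f i))"
  using assms
proof (induction I rule: infinite_finite_induct)
  case (insert i I)
  have "0 \<le> (\<Prod>i\<in>I. f i)" "(\<Prod>i\<in>I. f i) \<le> 1"
    using insert.prems by (auto intro: prod_nonneg prod_le_1)
  with insert show ?case by (simp add: log_neg_mult)
qed (simp_all add: log_neg_def)

lemma log_pos_log_neg_pos: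
  assumes "0 < y"
  shows "log_pos y = ennreal (max (ln y) 0)" "log_neg y = ennreal (max (- ln y) 0)"
  using assms by (auto simp: log_pos_def log_neg_def max_def ennreal_neg)

lemma log_pos_log_neg_scale:
  assumes "0 \<le> y" "y \<le> c" "0 < c"
  shows "log_pos y + log_neg (y / c) + log_neg c = log_neg y + log_pos c"
proof (cases "y = 0")
  case True
  then show ?thesis using assms by (simp add: log_neg_def)
next
  case False
  then have y: "0 < y" using assms by simp
  have yc: "0 < y / c" using y assms by simp
  have "ln y \<le> ln c" using y assms by simp
  then have "max (ln y) 0 + max (ln c - ln y) 0 + max (- ln c) 0 = max (- ln y) 0 + max (ln c) 0"
    by (auto simp: max_def)
  then show ?thesis
    unfolding log_pos_log_neg_pos[OF y] log_pos_log_neg_pos[OF yc] log_pos_log_neg_pos[OF \<open>0 < c\<close>]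
      ln_divide_pos[OF y \<open>0 < c\<close>]
    by (simp only: ennreal_plus[symmetric] max.cobounded2 add_nonneg_nonneg minus_diff_eq)
qed

lemma eexp_MInfty[simp]: "eexp (- \<infinity>) = 0"
  by (simp flip: MInfty_eq_minfinity)

text \<open>\<open>E[log f] = log c + E[log (f / c)]\<close>, where \<open>log (f / c) \<le> 0\<close> has only a negative part, so the
  identity also holds when both sides are \<open>-\<infinity>\<close>.\<close>

lemma exp_expect_log_scale:
  assumes "prob_space M" and c: "0 < c" and f: "f \<in> borel_measurable M"
    and f_bounds: "\<And>\<omega>. \<omega> \<in> space M \<Longrightarrow> 0 \<le> f \<omega> \<and> f \<omega> \<le> c"
  shows "exp_expect_log M f = ereal c * eexp (- enn2ereal (\<integral>\<^sup>+\<omega>. log_neg (f \<omega> / c) \<partial>M))"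
proof -
  interpret prob_space M by fact
  define p where "p = (\<integral>\<^sup>+\<omega>. log_pos (f \<omega>) \<partial>M)"
  define q where "q = (\<integral>\<^sup>+\<omega>. log_neg (f \<omega>) \<partial>M)"
  define A where "A = (\<integral>\<^sup>+\<omega>. log_neg (f \<omega> / c) \<partial>M)"
  have "(\<integral>\<^sup>+\<omega>. log_pos (f \<omega>) + log_neg (f \<omega> / c) + log_neg c \<partial>M)
      = (\<integral>\<^sup>+\<omega>. log_neg (f \<omega>) + log_pos c \<partial>M)"
    using f_bounds c by (intro nn_integral_cong log_pos_log_neg_scale) auto
  then have eq: "p + A + log_neg c = q + log_pos c"
    using f by (simp add: p_def q_def A_def nn_integral_add emeasure_space_1)
  have "p \<le> (\<integral>\<^sup>+\<omega>. log_pos c \<partial>M)"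
    unfolding p_def using f_bounds c
    by (intro nn_integral_mono) (auto simp: log_pos_def ennreal_leI)
  then have "p \<le> ennreal (max (ln c) 0)"
    using c by (simp add: emeasure_space_1 log_pos_log_neg_pos)
  then obtain P where P: "p = ennreal P" "0 \<le> P"
    by (cases p) (auto simp: top_unique)
  show ?thesis
  proof (cases "A = \<infinity>")
    case True
    then have "q = \<infinity>" using eq[symmetric] c by (simp add: log_pos_log_neg_pos)
    then show ?thesis
      using True P by (simp add: exp_expect_log_def Let_def flip: p_def q_def A_def)
  next
    case False
    then obtain a where a: "A = ennreal a" "0 \<le> a" by (cases A) auto
    moreover have "q \<noteq> \<infinity>" using eq P a c by (auto simp: log_pos_log_neg_pos)
    ultimately obtain Q where Q: "q = ennreal Q" "0 \<le> Q" by (cases q) auto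
    have "ennreal (P + a + max (- ln c) 0) = ennreal (Q + max (ln c) 0)"
      using eq unfolding P(1) a(1) Q(1) log_pos_log_neg_pos[OF c]
      by (simp only: ennreal_plus[symmetric] P(2) a(2) Q(2) max.cobounded2 add_nonneg_nonneg)
    then have "P + a + max (- ln c) 0 = Q + max (ln c) 0"
      using P a Q by (subst (asm) ennreal_inj) auto
    then have "P - Q = ln c - a" by (auto simp: max_def split: if_splits)
    then have "exp (P - Q) = exp (ln c + - a)" by simp
    then have "exp (P - Q) = c * exp (- a)" using c by (simp only: exp_add exp_ln)
    then show ?thesis
      using P Q a by (simp add: exp_expect_log_def Let_def flip: p_def q_def A_def)
  qed
qed

lemma exp_expect_log_zero:
  assumes "prob_space M"
  shows "exp_expect_log M (\<lambda>_. 0) = 0"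
  using prob_space.emeasure_space_1[OF assms]
  by (simp add: exp_expect_log_def log_pos_def log_neg_def zero_ereal_def zero_ennreal.rep_eq)

lemma log_neg_le_of_eexp_le:
  assumes "eexp (- enn2ereal t) \<le> ereal r"
  shows "log_neg r \<le> t"
proof (cases t)
  case (real s)
  then have "exp (- s) \<le> r" using assms by simp
  moreover have "0 < r" using exp_gt_zero[of "- s"] \<open>exp (- s) \<le> r\<close> by linarith
  ultimately have "- s \<le> ln r" by (simp add: ln_ge_iff)
  then show ?thesis using real \<open>0 < r\<close> by (auto simp: log_neg_def ennreal_leI)
qed simp

lemma eexp_le_power_of_log_neg:
  assumes r: "0 \<le> r" "r \<le> 1" and A: "of_nat n * log_neg r \<le> A"
  shows "eexp (- enn2ereal A) \<le> ereal (r ^ n)"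
proof (cases A)
  case (real t)
  show ?thesis
  proof (cases "r = 0")
    case True
    with A real have "n = 0" by (cases n) (auto simp: log_neg_def ennreal_mult_top top_unique)
    with real show ?thesis by simp
  next
    case False
    then have "real n * (- ln r) \<le> t"
      using A real r by (simp add: log_neg_def ennreal_of_nat_eq_real_of_nat ennreal_mult[symmetric])
    then have "exp (- t) \<le> exp (real n * ln r)" by simp
    also have "\<dots> = r ^ n" using r False by (simp add: exp_of_nat_mult)
    finally show ?thesis using real by simp
  qed
qed (use r in simp)

lemma exp_expect_log_cong:
  "(\<And>\<omega>. \<omega> \<in> space M \<Longrightarrow> f \<omega> = g \<omega>) \<Longrightarrow> exp_expect_log M f = exp_expect_log M g"
  unfolding exp_expect_log_def by (simp cong: nn_integral_cong)

lemma exp_expect_log_prod_le: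
  assumes M: "prob_space M" and c: "0 \<le> c" and r: "0 \<le> r" "r \<le> 1"
    and g: "\<And>k. k < n \<Longrightarrow> g k \<in> borel_measurable M"
    and g_bounds: "\<And>k \<omega>. k < n \<Longrightarrow> \<omega> \<in> space M \<Longrightarrow> 0 \<le> g k \<omega> \<and> g k \<omega> \<le> 1"
    and g_log: "\<And>k. k < n \<Longrightarrow> log_neg r \<le> (\<integral>\<^sup>+\<omega>. log_neg (g k \<omega>) \<partial>M)"
  shows "exp_expect_log M (\<lambda>\<omega>. c * (\<Prod>k<n. g k \<omega>)) \<le> ereal (r ^ n * c)"
proof (cases "c = 0")
  case True
  then show ?thesis using exp_expect_log_zero[OF M] by (simp add: zero_ereal_def)
next
  case False
  then have "0 < c" using c by simp
  have prod_bounds: "0 \<le> (\<Prod>k<n. g k \<omega>) \<and> (\<Prod>k<n. g k \<omega>) \<le> 1" if "\<omega> \<in> space M" for \<omega>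
    using g_bounds[OF _ that] by (auto intro: prod_nonneg prod_le_1)
  have "of_nat n * log_neg r = (\<Sum>k<n. log_neg r)" by simp
  also have "\<dots> \<le> (\<Sum>k<n. \<integral>\<^sup>+\<omega>. log_neg (g k \<omega>) \<partial>M)" by (intro sum_mono g_log) simp
  also have "\<dots> = (\<integral>\<^sup>+\<omega>. (\<Sum>k<n. log_neg (g k \<omega>)) \<partial>M)"
    using g by (intro nn_integral_sum[symmetric]) auto
  also have "\<dots> = (\<integral>\<^sup>+\<omega>. log_neg (c * (\<Prod>k<n. g k \<omega>) / c) \<partial>M)"
  proof (intro nn_integral_cong)
    fix \<omega> assume "\<omega> \<in> space M"
    then have "log_neg (\<Prod>k<n. g k \<omega>) = (\<Sum>k<n. log_neg (g k \<omega>))"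
      using g_bounds by (intro log_neg_prod) auto
    then show "(\<Sum>k<n. log_neg (g k \<omega>)) = log_neg (c * (\<Prod>k<n. g k \<omega>) / c)"
      using \<open>0 < c\<close> by simp
  qed
  finally have A: "of_nat n * log_neg r \<le> (\<integral>\<^sup>+\<omega>. log_neg (c * (\<Prod>k<n. g k \<omega>) / c) \<partial>M)" .
  have "exp_expect_log M (\<lambda>\<omega>. c * (\<Prod>k<n. g k \<omega>))
      = ereal c * eexp (- enn2ereal (\<integral>\<^sup>+\<omega>. log_neg (c * (\<Prod>k<n. g k \<omega>) / c) \<partial>M))"
    using prod_bounds g \<open>0 < c\<close>
    by (intro exp_expect_log_scale M) (auto intro!: mult_nonneg_nonneg mult_left_le borel_measurable_prod)
  also have "\<dots> \<le> ereal c * ereal (r ^ n)"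
    using eexp_le_power_of_log_neg[OF r A] c by (intro ereal_mult_left_mono) auto
  finally show ?thesis by (simp add: mult.commute)
qed

lemma proj_in_orthogonal:
  fixes V :: "'a::euclidean_space set"
  assumes "subspace V"
  shows "proj V u \<in> V \<and> (\<forall>v\<in>V. inner (u - proj V u) v = 0)"
proof -
  obtain y z where y: "y \<in> span V" and z: "\<And>w. w \<in> span V \<Longrightarrow> orthogonal z w" and u: "u = y + z"
    using orthogonal_subspace_decomp_exists[of V u] by blast
  have V: "span V = V" using assms by (simp add: span_eq_iff)
  have y_good: "y \<in> V \<and> (\<forall>v\<in>V. inner (u - y) v = 0)"
    using y z u V by (auto simp: orthogonal_def)
  have "w = y" if "w \<in> V \<and> (\<forall>v\<in>V. inner (u - w) v = 0)" for w
  proof -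
    have "y - w \<in> V" using that y_good assms by (simp add: subspace_diff)
    then have "inner (y - w) (y - w) = 0"
      using that y_good by (simp add: inner_diff_left)
    then show ?thesis by simp
  qed
  then have "proj V u = y" unfolding proj_def using y_good by (rule the_equality[rotated])
  with y_good show ?thesis by simp
qed

lemma proj_unique:
  fixes V :: "'a::euclidean_space set"
  assumes V: "subspace V" and "w \<in> V" "\<forall>v\<in>V. inner (u - w) v = 0"
  shows "proj V u = w"
proof -
  have P: "proj V u \<in> V \<and> (\<forall>v\<in>V. inner (u - proj V u) v = 0)" by (rule proj_in_orthogonal[OF V])
  then have "proj V u - w \<in> V" using assms by (simp add: subspace_diff)
  then have "inner (proj V u - w) (proj V u - w) = 0"
    using assms P by (simp add: inner_diff_left inner_diff_right algebra_simps)
  then show ?thesis by simp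
qed

lemma linear_proj:
  fixes V :: "'a::euclidean_space set"
  assumes V: "subspace V"
  shows "linear (proj V)"
proof
  fix a b
  show "proj V (a + b) = proj V a + proj V b"
    using proj_in_orthogonal[OF V, of a] proj_in_orthogonal[OF V, of b] V
    by (intro proj_unique) (auto simp: subspace_add inner_diff_left inner_add_left algebra_simps)
next
  fix r a
  show "proj V (r *\<^sub>R a) = r *\<^sub>R proj V a"
    using proj_in_orthogonal[OF V, of a] V
    by (intro proj_unique) (auto simp: subspace_scale inner_diff_left algebra_simps)
qed

lemma norm_diff_proj_sq:
  fixes V :: "'a::euclidean_space set"
  assumes "subspace V"
  shows "(norm (u - proj V u))\<^sup>2 = (norm u)\<^sup>2 - (norm (proj V u))\<^sup>2"
proof -
  have "orthogonal (proj V u) (u - proj V u)"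
    using proj_in_orthogonal[OF assms, of u] by (simp add: orthogonal_def inner_commute)
  from norm_add_Pythagorean[OF this] show ?thesis by simp
qed

lemma norm_proj_le:
  fixes V :: "'a::euclidean_space set"
  assumes "subspace V"
  shows "norm (proj V u) \<le> norm u"
  using norm_diff_proj_sq[OF assms, of u] zero_le_power2[of "norm (u - proj V u)"]
  by (simp add: power2_le_iff_abs_le[symmetric])

lemma space_subspace_measure[simp]: "space (subspace_measure C) = C"
  unfolding subspace_measure_def by (rule space_measure_of) auto

lemma measurable_proj_subspace[measurable]:
  "(\<lambda>V. proj V u) \<in> borel_measurable (subspace_measure C)"
proof (rule borel_measurableI)
  fix B :: "'a set"
  assume "open B"
  then have "{V \<in> C. proj V u \<in> B} \<in> sets (subspace_measure C)"
    unfolding subspace_measure_def by (subst sets_measure_of) (auto intro: sigma_sets.Basic)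
  then show "(\<lambda>V. proj V u) -` B \<inter> space (subspace_measure C) \<in> sets (subspace_measure C)"
    by (simp add: Int_def conj_commute)
qed

text \<open>Joint measurability reduces to the fixed-vector case by linearity: \<open>proj V u\<close> is a
  combination of the \<open>proj V b\<close>, \<open>b \<in> Basis\<close>, with coefficients continuous in \<open>u\<close>.\<close>

lemma measurable_proj_pair:
  fixes C :: "'a::euclidean_space set set"
  assumes "\<forall>V\<in>C. subspace V"
  shows "(\<lambda>(V, u). proj V u) \<in> borel_measurable (subspace_measure C \<Otimes>\<^sub>M (borel :: 'a measure))"
proof (rule measurable_cong[THEN iffD1])
  show "(\<lambda>p. \<Sum>b\<in>Basis. inner (snd p) b *\<^sub>R proj (fst p) b)
          \<in> borel_measurable (subspace_measure C \<Otimes>\<^sub>M (borel :: 'a measure))"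
    by measurable
  fix p :: "'a set \<times> 'a"
  assume "p \<in> space (subspace_measure C \<Otimes>\<^sub>M (borel :: 'a measure))"
  then have V: "subspace (fst p)" using assms by (auto simp: space_pair_measure)
  have "proj (fst p) (snd p) = proj (fst p) (\<Sum>b\<in>Basis. inner (snd p) b *\<^sub>R b)"
    by (simp add: euclidean_representation)
  also have "\<dots> = (\<Sum>b\<in>Basis. inner (snd p) b *\<^sub>R proj (fst p) b)"
    using linear_proj[OF V] by (simp add: linear_sum linear_scale)
  finally show "(\<Sum>b\<in>Basis. inner (snd p) b *\<^sub>R proj (fst p) b) = (case p of (V, u) \<Rightarrow> proj V u)"
    by (simp add: case_prod_beta)
qed

lemma measurable_proj:
  fixes C :: "'a::euclidean_space set set"
  assumes "\<forall>V\<in>C. subspace V" and "F \<in> M \<rightarrow>\<^sub>M subspace_measure C" and "G \<in> borel_measurable M"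
  shows "(\<lambda>\<omega>. proj (F \<omega>) (G \<omega>)) \<in> borel_measurable M"
  using measurable_compose[OF measurable_Pair[OF assms(2,3)] measurable_proj_pair[OF assms(1)]] by simp

lemma measurable_kacz:
  fixes C :: "'a::euclidean_space set set"
  assumes sub: "\<forall>V\<in>C. subspace V"
    and Ws: "\<And>k. k \<in> {1..n} \<Longrightarrow> (\<lambda>\<omega>. Ws \<omega> k) \<in> M \<rightarrow>\<^sub>M subspace_measure C"
  shows "(\<lambda>\<omega>. kacz (Ws \<omega>) x x0 n) \<in> borel_measurable M"
  using Ws
proof (induction n)
  case (Suc n)
  have "(\<lambda>\<omega>. Ws \<omega> (Suc n)) \<in> M \<rightarrow>\<^sub>M subspace_measure C" using Suc.prems by simp
  with Suc show ?case by (auto intro!: borel_measurable_add borel_measurable_diff measurable_proj[OF sub])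
qed simp

lemma kacz_cong: "(\<And>k. k \<in> {1..n} \<Longrightarrow> Ws k = Vs k) \<Longrightarrow> kacz Ws x x0 n = kacz Vs x x0 n"
  by (induction n) auto

definition contraction_factor :: "'a::real_inner set \<Rightarrow> 'a \<Rightarrow> real" where
  "contraction_factor V u = 1 - (norm (proj V u))\<^sup>2"

lemma contraction_factor_bounds:
  fixes V :: "'a::euclidean_space set"
  assumes "subspace V" and "norm u = 1"
  shows "0 \<le> contraction_factor V u \<and> contraction_factor V u \<le> 1"
  using norm_proj_le[OF assms(1), of u] assms(2)
  by (simp add: contraction_factor_def abs_square_le_1)

lemma measurable_contraction_factor:
  fixes C :: "'a::euclidean_space set set"
  assumes "\<forall>V\<in>C. subspace V" and "F \<in> M \<rightarrow>\<^sub>M subspace_measure C" and "G \<in> borel_measurable M"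
  shows "(\<lambda>\<omega>. contraction_factor (F \<omega>) (G \<omega>)) \<in> borel_measurable M"
  using measurable_proj[OF assms] unfolding contraction_factor_def by measurable

definition direction :: "'a::real_normed_vector \<Rightarrow> 'a \<Rightarrow> 'a" where
  "direction u0 e = (if e = 0 then u0 else sgn e)"

lemma norm_direction: "norm u0 = 1 \<Longrightarrow> norm (direction u0 e) = 1"
  by (simp add: direction_def norm_sgn)

lemma measurable_direction[measurable]:
  "direction u0 \<in> borel_measurable (borel :: 'a::real_normed_vector measure)"
  unfolding direction_def by measurable

lemma norm_diff_proj_sq_direction:
  fixes V :: "'a::euclidean_space set"
  assumes V: "subspace V"
  shows "(norm (e - proj V e))\<^sup>2 = (norm e)\<^sup>2 * contraction_factor V (direction u0 e)"
proof (cases "e = 0")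
  case True
  then show ?thesis using linear_0[OF linear_proj[OF V]] by simp
next
  case False
  then have "e = norm e *\<^sub>R direction u0 e" by (simp add: direction_def sgn_div_norm)
  then have "proj V e = norm e *\<^sub>R proj V (direction u0 e)"
    using linear_scale[OF linear_proj[OF V]] by metis
  then have "(norm (proj V e))\<^sup>2 = (norm e)\<^sup>2 * (norm (proj V (direction u0 e)))\<^sup>2"
    by (simp add: power_mult_distrib)
  then show ?thesis
    by (simp add: norm_diff_proj_sq[OF V] contraction_factor_def algebra_simps)
qed

lemma kacz_error_Suc:
  fixes Ws :: "nat \<Rightarrow> 'a::euclidean_space set"
  assumes "subspace (Ws (Suc k))"
  shows "x - kacz Ws x x0 (Suc k)
    = (x - kacz Ws x x0 k) - proj (Ws (Suc k)) (x - kacz Ws x x0 k)"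
  using linear_diff[OF linear_proj[OF assms], of x "kacz Ws x x0 k"] by (simp add: algebra_simps)

lemma norm_kacz_error_sq:
  fixes Ws :: "nat \<Rightarrow> 'a::euclidean_space set"
  assumes "\<And>k. k \<in> {1..n} \<Longrightarrow> subspace (Ws k)"
  shows "(norm (x - kacz Ws x x0 n))\<^sup>2 = (norm (x - x0))\<^sup>2 *
    (\<Prod>k<n. contraction_factor (Ws (Suc k)) (direction u0 (x - kacz Ws x x0 k)))"
  using assms
proof (induction n)
  case (Suc n)
  then have V: "subspace (Ws (Suc n))" by simp
  have "(norm (x - kacz Ws x x0 (Suc n)))\<^sup>2
      = (norm (x - kacz Ws x x0 n))\<^sup>2 * contraction_factor (Ws (Suc n)) (direction u0 (x - kacz Ws x x0 n))"
    unfolding kacz_error_Suc[of Ws n, OF V] by (rule norm_diff_proj_sq_direction[OF V])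
  with Suc show ?case by simp
qed simp

lemma (in prob_space) nn_integral_indep_var_lower_bound:
  assumes indep: "indep_var S X T Y" and F: "F \<in> borel_measurable (S \<Otimes>\<^sub>M T)"
    and bound: "\<And>s. s \<in> space S \<Longrightarrow> b \<le> (\<integral>\<^sup>+\<omega>. F (s, Y \<omega>) \<partial>M)"
  shows "b \<le> (\<integral>\<^sup>+\<omega>. F (X \<omega>, Y \<omega>) \<partial>M)"
proof -
  have X: "X \<in> M \<rightarrow>\<^sub>M S" and Y: "Y \<in> M \<rightarrow>\<^sub>M T"
    and joint: "distr M (S \<Otimes>\<^sub>M T) (\<lambda>\<omega>. (X \<omega>, Y \<omega>)) = distr M S X \<Otimes>\<^sub>M distr M T Y"
    using indep unfolding indep_var_distribution_eq by auto
  interpret PX: prob_space "distr M S X" by (rule prob_space_distr[OF X])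
  interpret PY: prob_space "distr M T Y" by (rule prob_space_distr[OF Y])
  have "sets (distr M S X \<Otimes>\<^sub>M distr M T Y) = sets (S \<Otimes>\<^sub>M T)"
    by (intro sets_pair_measure_cong) simp_all
  with F have F': "F \<in> borel_measurable (distr M S X \<Otimes>\<^sub>M distr M T Y)"
    using measurable_cong_sets[OF _ refl] by blast
  have "b = (\<integral>\<^sup>+s. b \<partial>distr M S X)"
    using PX.emeasure_space_1 by simp
  also have "\<dots> \<le> (\<integral>\<^sup>+s. \<integral>\<^sup>+\<omega>. F (s, Y \<omega>) \<partial>M \<partial>distr M S X)"
    by (intro nn_integral_mono bound) simp
  also have "\<dots> = (\<integral>\<^sup>+s. \<integral>\<^sup>+t. F (s, t) \<partial>distr M T Y \<partial>distr M S X)"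
    using Y measurable_Pair2[OF F] by (intro nn_integral_cong nn_integral_distr[symmetric]) auto
  also have "\<dots> = (\<integral>\<^sup>+p. F p \<partial>(distr M S X \<Otimes>\<^sub>M distr M T Y))"
    using F' by (rule PY.nn_integral_fst)
  also have "\<dots> = (\<integral>\<^sup>+\<omega>. F (X \<omega>, Y \<omega>) \<partial>M)"
    unfolding joint[symmetric] using X Y F by (subst nn_integral_distr) (auto intro: measurable_Pair)
  finally show ?thesis .
qed

lemma exp_expect_log_contraction_factor:
  fixes C :: "'a::euclidean_space set set"
  assumes "prob_space N" and sub: "\<forall>V\<in>C. subspace V" and W: "W \<in> N \<rightarrow>\<^sub>M subspace_measure C"
    and u: "norm u = 1"
  shows "exp_expect_log N (\<lambda>\<eta>. 1 - (norm (proj (W \<eta>) u))\<^sup>2)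
    = eexp (- enn2ereal (\<integral>\<^sup>+\<eta>. log_neg (contraction_factor (W \<eta>) u) \<partial>N))"
proof -
  have "W \<eta> \<in> C" if "\<eta> \<in> space N" for \<eta> using measurable_space[OF W that] by simp
  then have "0 \<le> contraction_factor (W \<eta>) u \<and> contraction_factor (W \<eta>) u \<le> 1" if "\<eta> \<in> space N" for \<eta>
    using sub that by (intro contraction_factor_bounds u) auto
  with exp_expect_log_scale[OF assms(1) zero_less_one, of "\<lambda>\<eta>. contraction_factor (W \<eta>) u"]
  show ?thesis
    using measurable_contraction_factor[OF sub W measurable_const] by (simp add: contraction_factor_def)
qed

lemma alpha_log_bounds:
  fixes C :: "'a::euclidean_space set set"
  assumes "prob_space N" and "\<forall>V\<in>C. subspace V" and "W \<in> N \<rightarrow>\<^sub>M subspace_measure C"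
  shows "0 \<le> alpha_log N W \<and> alpha_log N W \<le> 1"
proof -
  have eexp_bounds: "0 \<le> eexp (- enn2ereal t) \<and> eexp (- enn2ereal t) \<le> 1" for t
    by (cases t) auto
  obtain b :: 'a where "b \<in> Basis" using nonempty_Basis by blast
  then have "b \<in> sphere 0 1" by simp
  then have "0 \<le> alpha_log N W"
    unfolding alpha_log_def using exp_expect_log_contraction_factor[OF assms, of b] eexp_bounds
    by (intro SUP_upper2) auto
  moreover have "alpha_log N W \<le> 1"
    unfolding alpha_log_def using exp_expect_log_contraction_factor[OF assms] eexp_bounds
    by (intro SUP_least) simp
  ultimately show ?thesis ..
qed

lemma log_neg_alpha_log_le:
  fixes C :: "'a::euclidean_space set set"
  assumes "prob_space N" and "\<forall>V\<in>C. subspace V" and "W \<in> N \<rightarrow>\<^sub>M subspace_measure C"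
    and "alpha_log N W = ereal r" and "norm u = 1"
  shows "log_neg r \<le> (\<integral>\<^sup>+\<eta>. log_neg (contraction_factor (W \<eta>) u) \<partial>N)"
proof (rule log_neg_le_of_eexp_le)
  have "exp_expect_log N (\<lambda>\<eta>. 1 - (norm (proj (W \<eta>) u))\<^sup>2) \<le> alpha_log N W"
    unfolding alpha_log_def using \<open>norm u = 1\<close> by (intro SUP_upper) simp
  then show "eexp (- enn2ereal (\<integral>\<^sup>+\<eta>. log_neg (contraction_factor (W \<eta>) u) \<partial>N)) \<le> ereal r"
    using assms by (simp add: exp_expect_log_contraction_factor)
qed

text \<open>The direction of the error after \<open>n\<close> steps depends only on \<open>W\<^sub>1, \<dots>, W\<^sub>n\<close>, which are
  independent of \<open>W\<^sub>n\<^sub>+\<^sub>1\<close>; so the expected log-contraction of step \<open>n + 1\<close> is an average of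
  the expected log-contractions of fixed directions.\<close>

lemma log_neg_alpha_log_le_kacz_step:
  fixes C :: "'a::euclidean_space set set" and W :: "'n \<Rightarrow> 'a set" and Ws :: "nat \<Rightarrow> 'm \<Rightarrow> 'a set"
  assumes sub: "\<forall>V\<in>C. subspace V"
    and N: "prob_space N" and W: "W \<in> N \<rightarrow>\<^sub>M subspace_measure C"
    and M: "prob_space M" and Ws: "\<forall>k\<ge>1. Ws k \<in> M \<rightarrow>\<^sub>M subspace_measure C"
    and indep: "prob_space.indep_vars M (\<lambda>_. subspace_measure C) Ws {1..}"
    and distr: "\<forall>k\<ge>1. distr M (subspace_measure C) (Ws k) = distr N (subspace_measure C) W"
    and alpha: "alpha_log N W = ereal r" and u0: "norm u0 = 1"
  shows "log_neg r \<le> (\<integral>\<^sup>+\<omega>. log_neg (contraction_factor (Ws (Suc n) \<omega>)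
                        (direction u0 (x - kacz (\<lambda>k. Ws k \<omega>) x x0 n))) \<partial>M)"
proof -
  interpret M: prob_space M by (rule M)
  define S where "S = subspace_measure C"
  define P where "P = PiM {1..n} (\<lambda>_. S)"
  define Q where "Q = PiM {Suc n} (\<lambda>_. S)"
  define G where "G g V = log_neg (contraction_factor V (direction u0 (x - kacz g x x0 n)))"
    for g :: "nat \<Rightarrow> 'a set" and V
  have indep_step: "M.indep_var P (\<lambda>\<omega>. restrict (\<lambda>k. Ws k \<omega>) {1..n}) Q (\<lambda>\<omega>. restrict (\<lambda>k. Ws k \<omega>) {Suc n})"
    unfolding P_def Q_def S_def by (rule M.indep_var_restrict[OF indep]) auto
  have "(\<lambda>p. kacz (fst p) x x0 n) \<in> borel_measurable (P \<Otimes>\<^sub>M S)"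
    unfolding P_def
    by (rule measurable_kacz[OF sub]) (auto simp: S_def intro: measurable_component_singleton)
  then have G: "(\<lambda>p. G (fst p) (snd p)) \<in> borel_measurable (P \<Otimes>\<^sub>M S)"
    unfolding G_def S_def by (intro measurable_compose[OF _ log_neg_measurable]
        measurable_contraction_factor[OF sub]) measurable
  have "(\<lambda>h. h (Suc n)) \<in> Q \<rightarrow>\<^sub>M S"
    unfolding Q_def by (rule measurable_component_singleton) simp
  then have "(\<lambda>p. (fst p, snd p (Suc n))) \<in> P \<Otimes>\<^sub>M Q \<rightarrow>\<^sub>M P \<Otimes>\<^sub>M S"
    by measurable
  from measurable_compose[OF this G]
  have F: "(\<lambda>p. G (fst p) (snd p (Suc n))) \<in> borel_measurable (P \<Otimes>\<^sub>M Q)" by simp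
  have "log_neg r \<le> (\<integral>\<^sup>+\<omega>. G g (Ws (Suc n) \<omega>) \<partial>M)" if "g \<in> space P" for g
  proof -
    have G_g: "G g \<in> borel_measurable S"
      using measurable_Pair2[OF G that] by simp
    have "log_neg r \<le> (\<integral>\<^sup>+\<eta>. G g (W \<eta>) \<partial>N)"
      unfolding G_def using log_neg_alpha_log_le[OF N sub W alpha] norm_direction[OF u0] by simp
    also have "\<dots> = (\<integral>\<^sup>+V. G g V \<partial>distr N S W)"
      using W G_g by (simp add: S_def nn_integral_distr)
    also have "\<dots> = (\<integral>\<^sup>+V. G g V \<partial>distr M S (Ws (Suc n)))"
      using distr by (simp add: S_def)
    also have "\<dots> = (\<integral>\<^sup>+\<omega>. G g (Ws (Suc n) \<omega>) \<partial>M)"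
      using Ws G_g by (intro nn_integral_distr) (auto simp: S_def)
    finally show ?thesis .
  qed
  then have "log_neg r \<le> (\<integral>\<^sup>+\<omega>. G (restrict (\<lambda>k. Ws k \<omega>) {1..n}) (Ws (Suc n) \<omega>) \<partial>M)"
    using M.nn_integral_indep_var_lower_bound[OF indep_step F] by simp
  also have "\<dots> = (\<integral>\<^sup>+\<omega>. G (\<lambda>k. Ws k \<omega>) (Ws (Suc n) \<omega>) \<partial>M)"
    using kacz_cong[of n "restrict (\<lambda>k. Ws k _) {1..n}" "\<lambda>k. Ws k _"] by (simp add: G_def)
  finally show ?thesis unfolding G_def .
qed

theorem exp_expect_log_kacz_error_le:
  fixes C :: "'a::euclidean_space set set" and W :: "'n \<Rightarrow> 'a set" and Ws :: "nat \<Rightarrow> 'm \<Rightarrow> 'a set"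
  assumes sub: "\<forall>V\<in>C. subspace V"
    and N: "prob_space N" and W: "W \<in> N \<rightarrow>\<^sub>M subspace_measure C"
    and M: "prob_space M" and Ws: "\<forall>k\<ge>1. Ws k \<in> M \<rightarrow>\<^sub>M subspace_measure C"
    and indep: "prob_space.indep_vars M (\<lambda>_. subspace_measure C) Ws {1..}"
    and distr: "\<forall>k\<ge>1. distr M (subspace_measure C) (Ws k) = distr N (subspace_measure C) W"
  shows "exp_expect_log M (\<lambda>\<omega>. (norm (x - kacz (\<lambda>k. Ws k \<omega>) x x0 n))\<^sup>2)
           \<le> alpha_log N W ^ n * ereal ((norm (x - x0))\<^sup>2)"
proof -
  obtain r where alpha: "alpha_log N W = ereal r" and r: "0 \<le> r" "r \<le> 1"
    using alpha_log_bounds[OF N sub W] by (cases "alpha_log N W") auto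
  obtain u0 :: 'a where u0: "norm u0 = 1"
    using nonempty_Basis norm_Basis by blast
  define g where "g k \<omega> = contraction_factor (Ws (Suc k) \<omega>) (direction u0 (x - kacz (\<lambda>k. Ws k \<omega>) x x0 k))"
    for k \<omega>
  have Ws_subspace: "subspace (Ws k \<omega>)" if "\<omega> \<in> space M" "k \<ge> 1" for k \<omega>
    using sub measurable_space[OF Ws[rule_format, OF \<open>k \<ge> 1\<close>] \<open>\<omega> \<in> space M\<close>] by simp
  have "(\<lambda>\<omega>. kacz (\<lambda>k. Ws k \<omega>) x x0 k) \<in> borel_measurable M" for k
    using Ws by (intro measurable_kacz[OF sub]) auto
  then have "g k \<in> borel_measurable M" for k
    unfolding g_def using Ws by (intro measurable_contraction_factor[OF sub]) auto
  moreover have "0 \<le> g k \<omega> \<and> g k \<omega> \<le> 1" if "\<omega> \<in> space M" for k \<omega>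
    unfolding g_def using Ws_subspace[OF that] norm_direction[OF u0]
    by (intro contraction_factor_bounds) auto
  moreover have "log_neg r \<le> (\<integral>\<^sup>+\<omega>. log_neg (g k \<omega>) \<partial>M)" for k
    unfolding g_def by (rule log_neg_alpha_log_le_kacz_step[OF sub N W M Ws indep distr alpha u0])
  ultimately have "exp_expect_log M (\<lambda>\<omega>. (norm (x - x0))\<^sup>2 * (\<Prod>k<n. g k \<omega>)) \<le> ereal (r ^ n * (norm (x - x0))\<^sup>2)"
    using M r by (intro exp_expect_log_prod_le) auto
  moreover have "exp_expect_log M (\<lambda>\<omega>. (norm (x - kacz (\<lambda>k. Ws k \<omega>) x x0 n))\<^sup>2)
      = exp_expect_log M (\<lambda>\<omega>. (norm (x - x0))\<^sup>2 * (\<Prod>k<n. g k \<omega>))"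
    unfolding g_def using Ws_subspace by (intro exp_expect_log_cong norm_kacz_error_sq) auto
  ultimately show ?thesis using alpha by simp
qed

theorem theorem3p4:
  shows
  "(\<forall>(N::'n measure) (W::'n \<Rightarrow> (real^'d) set) (M::'m measure) (Ws::nat \<Rightarrow> 'm \<Rightarrow> (real^'d) set)
       (x::real^'d) x0 n.
      prob_space N \<and> W \<in> N \<rightarrow>\<^sub>M subspace_measure {V. subspace V} \<and>
      prob_space M \<and> (\<forall>k\<ge>1. Ws k \<in> M \<rightarrow>\<^sub>M subspace_measure {V. subspace V}) \<and>
      prob_space.indep_vars M (\<lambda>_. subspace_measure {V. subspace V}) Ws {1..} \<and>
      (\<forall>k\<ge>1. distr M (subspace_measure {V. subspace V}) (Ws k)
              = distr N (subspace_measure {V. subspace V}) W)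
      \<longrightarrow> exp_expect_log M (\<lambda>\<omega>. (norm (x - kacz (\<lambda>k. Ws k \<omega>) x x0 n))\<^sup>2)
            \<le> (alpha_log N W) ^ n * ereal ((norm (x - x0))\<^sup>2))
   \<and>
   (\<forall>(N::'n measure) (W::'n \<Rightarrow> (complex^'d) set) (M::'m measure) (Ws::nat \<Rightarrow> 'm \<Rightarrow> (complex^'d) set)
       (x::complex^'d) x0 n.
      prob_space N \<and> W \<in> N \<rightarrow>\<^sub>M subspace_measure {V. complex_subspace V} \<and>
      prob_space M \<and> (\<forall>k\<ge>1. Ws k \<in> M \<rightarrow>\<^sub>M subspace_measure {V. complex_subspace V}) \<and>
      prob_space.indep_vars M (\<lambda>_. subspace_measure {V. complex_subspace V}) Ws {1..} \<and>
      (\<forall>k\<ge>1. distr M (subspace_measure {V. complex_subspace V}) (Ws k)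
              = distr N (subspace_measure {V. complex_subspace V}) W)
      \<longrightarrow> exp_expect_log M (\<lambda>\<omega>. (norm (x - kacz (\<lambda>k. Ws k \<omega>) x x0 n))\<^sup>2)
            \<le> (alpha_log N W) ^ n * ereal ((norm (x - x0))\<^sup>2))"
  apply (intro conjI allI impI)
  subgoal by (rule exp_expect_log_kacz_error_le[where C = "{V. subspace V}"]) auto
  subgoal by (rule exp_expect_log_kacz_error_le[where C = "{V. complex_subspace V}"])
      (auto simp: complex_subspace_def)
  done

end
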